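(* Fix $\mu>-3/2$, $z>0$, and let $u_y$ and $M_y$ be as in the context. Then as $y\downarrow0$, $$u_y=\frac{\log(y)^2}{4y^2}\left[1-\frac{2\log\log(1/y)}{\log(y)}+\frac{\log(z^2)}{\log(y)}+o\!\left(\frac{1}{\log(y)}\right)\right],$$ and $$M_y=\frac{y^3}{\log(y)^2}\left[1+\mathcal{O}\!\left(\frac{\log|\log(y)|}{\log(y)}\right)\right].$$
   Context: For $y>0$, $u_y$ denotes the largest positive solution $u$ of $2\mu-1+4uy+2\log(z/2)\sqrt{u}-\sqrt{u}\log(u)=0$; $\alpha:=1+\log(z)-\log(2)$; and $M_y:=\frac{\log(u_y)}{16u_y^{3/2}}-\frac{\alpha}{8u_y^{3/2}}+\frac{1-2\mu}{8u_y^2}$. *)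

theory Defs
  imports "HOL-Analysis.Analysis" "HOL-Library.Landau_Symbols"
begin

definition u_y :: "real \<Rightarrow> real \<Rightarrow> real \<Rightarrow> real" where
  "u_y \<mu> z y = (GREATEST u. u > 0 \<and>
      2*\<mu> - 1 + 4*u*y + 2*ln (z/2) * sqrt u - sqrt u * ln u = 0)"

definition alpha :: "real \<Rightarrow> real" where
  "alpha z = 1 + ln z - ln 2"

definition M_y :: "real \<Rightarrow> real \<Rightarrow> real \<Rightarrow> real" where
  "M_y \<mu> z y = (let u = u_y \<mu> z y in
      ln u / (16 * u powr (3/2)) - alpha z / (8 * u powr (3/2)) + (1 - 2*\<mu>) / (8 * u^2))"

end

theory Submission
  imports Defs "HOL-Real_Asymp.Real_Asymp"
begin

text \<open>Substituting t = 2 y sqrt u turns the defining equation of u_y into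
  t - ln t = ln (1/y) - ln z + O(y/t), whose largest root is t = L + ln L - ln z + O(ln L / L) with
  L = ln (1/y). The rescaled equation is negative at L + ln L - ln z and positive everywhere
  beyond L + ln L - ln z + 2 ln L / L, so the largest root lies in between. Both u_y and, up to a
  negligible term, M_y are monotone expressions in t, so each claim follows by squeezing between
  explicit functions of y built from the two ends of this bracket.\<close>

lemma eventually_between_smallo:
  fixes f lo hi h :: "'a \<Rightarrow> real"
  assumes "eventually (\<lambda>x. lo x \<le> f x \<and> f x \<le> hi x) F"
    and "lo \<in> o[F](h)" and "hi \<in> o[F](h)"
  shows "f \<in> o[F](h)"
proof -
  have "f \<in> O[F](\<lambda>x. \<bar>lo x\<bar> + \<bar>hi x\<bar>)"
    by (rule bigoI[where c=1]) (use assms(1) in \<open>auto elim!: eventually_mono\<close>)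
  moreover have "(\<lambda>x. \<bar>lo x\<bar> + \<bar>hi x\<bar>) \<in> o[F](h)"
    using assms(2,3) by (intro sum_in_smallo) simp_all
  ultimately show ?thesis by (rule landau_o.big_small_trans)
qed

lemma eventually_between_bigo:
  fixes f lo hi h :: "'a \<Rightarrow> real"
  assumes "eventually (\<lambda>x. lo x \<le> f x \<and> f x \<le> hi x) F"
    and "lo \<in> O[F](h)" and "hi \<in> O[F](h)"
  shows "f \<in> O[F](h)"
proof -
  have "f \<in> O[F](\<lambda>x. \<bar>lo x\<bar> + \<bar>hi x\<bar>)"
    by (rule bigoI[where c=1]) (use assms(1) in \<open>auto elim!: eventually_mono\<close>)
  moreover have "(\<lambda>x. \<bar>lo x\<bar> + \<bar>hi x\<bar>) \<in> O[F](h)"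
    using assms(2,3) by (intro sum_in_bigo) simp_all
  ultimately show ?thesis by (rule landau_o.big_trans)
qed

lemma greatest_zero_between:
  fixes f :: "real \<Rightarrow> real"
  assumes "a \<le> b" and "continuous_on {a..b} f" and "f a < 0" and "\<And>t. t \<ge> b \<Longrightarrow> f t > 0"
  obtains s where "a \<le> s" "s \<le> b" "f s = 0" "\<And>t. f t = 0 \<Longrightarrow> t \<le> s"
proof -
  define Z where "Z = {a..b} \<inter> f -` {0}"
  have "\<exists>s. a \<le> s \<and> s \<le> b \<and> f s = 0"
    using IVT'[of f a 0 b] assms(1-3) assms(4)[of b] by (simp add: less_imp_le)
  then have "Z \<noteq> {}" unfolding Z_def by auto
  moreover have "compact Z"
  proof -
    have "closed Z"
      unfolding Z_def by (rule continuous_closed_preimage[OF assms(2)]) auto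
    moreover have "bounded Z"
      unfolding Z_def by (rule bounded_subset[of "{a..b}"]) auto
    ultimately show ?thesis by (simp add: compact_eq_bounded_closed)
  qed
  ultimately obtain s where "s \<in> Z" and s_max: "\<forall>t\<in>Z. t \<le> s"
    by (meson compact_attains_sup)
  show ?thesis
  proof (rule that)
    show "a \<le> s" "s \<le> b" "f s = 0" using \<open>s \<in> Z\<close> by (auto simp: Z_def)
    show "t \<le> s" if "f t = 0" for t
    proof (cases "t \<ge> a")
      case True
      have "t < b" using assms(4)[of t] that by force
      with True that show ?thesis using s_max by (simp add: Z_def)
    next
      case False
      then show ?thesis using \<open>a \<le> s\<close> by simp
    qed
  qed
qed

text \<open>The defining equation of u_y, divided by 2 sqrt u and written in t = 2 y sqrt u.\<close>

definition root_eq :: "real \<Rightarrow> real \<Rightarrow> real \<Rightarrow> real \<Rightarrow> real" where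
  "root_eq \<mu> z y t = t - ln t - ln (1/y) + ln z + (2*\<mu> - 1) * y / t"

lemma u_y_equation_iff_root_eq:
  fixes \<mu> z y u :: real
  assumes "y > 0" and "z > 0" and "u > 0"
  shows "2*\<mu> - 1 + 4*u*y + 2*ln (z/2) * sqrt u - sqrt u * ln u = 0
           \<longleftrightarrow> root_eq \<mu> z y (2*y * sqrt u) = 0"
proof -
  define s where "s = sqrt u"
  have s: "s > 0" "u = s^2" "sqrt u = s" using assms(3) by (auto simp: s_def)
  have "ln (2*y * s) = ln 2 + ln y + ln s" "ln (1/y) = - ln y"
    using assms(1) s(1) by (simp_all add: ln_mult ln_div)
  then have "root_eq \<mu> z y (2*y * s) = 2*y * s - ln 2 - ln s + ln z + (2*\<mu> - 1) / (2 * s)"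
    using assms(1) by (simp add: root_eq_def)
  then have scaled: "2 * s * root_eq \<mu> z y (2*y * s)
      = 4 * s^2 * y - 2 * s * ln 2 - 2 * s * ln s + 2 * s * ln z + (2*\<mu> - 1)"
    using s(1) by (simp add: field_simps power2_eq_square)
  have logs: "ln u = 2 * ln s" "ln (z/2) = ln z - ln 2"
    using s(1,2) assms(2) by (simp_all add: ln_realpow ln_div)
  have "2*\<mu> - 1 + 4*u*y + 2*ln (z/2) * sqrt u - sqrt u * ln u
      = 2 * s * root_eq \<mu> z y (2*y * s)"
    unfolding scaled logs s(3) by (simp add: s(2) algebra_simps)
  then show ?thesis using s(1,3) by simp
qed

lemma u_y_eq_greatest_root:
  fixes \<mu> z y t :: real
  assumes "y > 0" and "z > 0" and "t > 0" and "root_eq \<mu> z y t = 0"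
    and greatest: "\<And>t'. t' > 0 \<Longrightarrow> root_eq \<mu> z y t' = 0 \<Longrightarrow> t' \<le> t"
  shows "u_y \<mu> z y = (t/(2*y))^2"
  unfolding u_y_def
proof (rule Greatest_equality)
  have "sqrt ((t/(2*y))^2) = t/(2*y)" using assms by simp
  then show "(t/(2*y))^2 > 0 \<and> 2*\<mu> - 1 + 4*(t/(2*y))^2*y + 2*ln (z/2) * sqrt ((t/(2*y))^2)
              - sqrt ((t/(2*y))^2) * ln ((t/(2*y))^2) = 0"
    using assms u_y_equation_iff_root_eq[of y z "(t/(2*y))^2" \<mu>] by simp
next
  fix u assume "u > 0 \<and> 2*\<mu> - 1 + 4*u*y + 2*ln (z/2) * sqrt u - sqrt u * ln u = 0"
  then have "u > 0" and "2*y * sqrt u \<le> t"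
    using assms u_y_equation_iff_root_eq[of y z u \<mu>] greatest[of "2*y * sqrt u"] by auto
  then have "sqrt u \<le> t/(2*y)" using assms(1) by (simp add: field_simps)
  then show "u \<le> (t/(2*y))^2"
    using \<open>u > 0\<close> by (metis real_le_rsqrt sqrt_le_D)
qed

lemma root_eq_pos:
  fixes \<mu> z y b t :: real
  assumes "1 \<le> b" and "b \<le> t" and "y \<ge> 0"
    and "b - ln b - ln (1/y) + ln z - \<bar>2*\<mu> - 1\<bar> * y / b > 0"
  shows "root_eq \<mu> z y t > 0"
proof -
  have b: "b > 0" "t > 0" using assms(1,2) by linarith+
  have "ln t - ln b \<le> t/b - 1"
    using ln_le_minus_one[of "t/b"] b by (simp add: ln_div)
  also have "t/b - 1 \<le> t - b"
  proof -
    have "(t - b) * 1 \<le> (t - b) * b" using assms(1,2) by (intro mult_left_mono) auto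
    then show ?thesis using b by (simp add: field_simps)
  qed
  finally have mono: "b - ln b \<le> t - ln t" by simp
  have "\<bar>(2*\<mu> - 1) * y / t\<bar> = \<bar>2*\<mu> - 1\<bar> * y / t"
    using assms(3) b by (simp add: abs_mult)
  also have "\<dots> \<le> \<bar>2*\<mu> - 1\<bar> * y / b"
    using assms b by (intro divide_left_mono) auto
  finally have "(2*\<mu> - 1) * y / t \<ge> - (\<bar>2*\<mu> - 1\<bar> * y / b)" by linarith
  then show ?thesis using mono assms(4) by (simp add: root_eq_def)
qed

lemma u_y_between:
  fixes \<mu> z y a b :: real
  assumes "y > 0" and "z > 0" and "0 < a" and "a \<le> b" and "1 \<le> b"
    and "root_eq \<mu> z y a < 0"
    and "b - ln b - ln (1/y) + ln z - \<bar>2*\<mu> - 1\<bar> * y / b > 0"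
  obtains t where "a \<le> t" and "t \<le> b" and "u_y \<mu> z y = (t/(2*y))^2"
proof -
  have cont: "continuous_on {a..b} (root_eq \<mu> z y)"
    unfolding root_eq_def using assms(3) by (intro continuous_intros) auto
  have pos: "\<And>t. t \<ge> b \<Longrightarrow> root_eq \<mu> z y t > 0"
    using root_eq_pos assms(1,5,7) by (simp add: less_imp_le)
  obtain t where t: "a \<le> t" "t \<le> b" "root_eq \<mu> z y t = 0"
    and greatest: "\<And>t'. root_eq \<mu> z y t' = 0 \<Longrightarrow> t' \<le> t"
    using greatest_zero_between[OF assms(4) cont assms(6) pos] by blast
  have "u_y \<mu> z y = (t/(2*y))^2"
    using u_y_eq_greatest_root[OF assms(1,2) _ t(3) greatest] t(1) assms(3) by simp
  with t(1,2) that show ?thesis by blast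
qed

text \<open>The bracket for the largest root of root_eq: the margin 2 ln L / L, L = ln (1/y), exceeds
  the error of the approximation L + ln L - ln z.\<close>

definition root_lower :: "real \<Rightarrow> real \<Rightarrow> real" where
  "root_lower z y = ln (1/y) + ln (ln (1/y)) - ln z"

definition root_upper :: "real \<Rightarrow> real \<Rightarrow> real" where
  "root_upper z y = root_lower z y + 2 * ln (ln (1/y)) / ln (1/y)"

lemma eventually_root_lower_pos: "\<forall>\<^sub>F y in at_right 0. 0 < root_lower z y"
  unfolding root_lower_def by real_asymp

lemma eventually_u_y_between_root_bounds:
  fixes \<mu> z :: real
  assumes "z > 0"
  shows "\<forall>\<^sub>F y in at_right 0. \<exists>t. root_lower z y \<le> t \<and> t \<le> root_upper z y \<and> u_y \<mu> z y = (t/(2*y))^2"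
proof -
  have "\<forall>\<^sub>F y in at_right 0. (y::real) > 0" by (rule eventually_at_right_less)
  moreover note eventually_root_lower_pos[of z]
  moreover have "\<forall>\<^sub>F y in at_right 0. root_lower z y \<le> root_upper z y"
    unfolding root_upper_def root_lower_def by real_asymp
  moreover have "\<forall>\<^sub>F y in at_right 0. 1 \<le> root_upper z y"
    unfolding root_upper_def root_lower_def by real_asymp
  moreover have "\<forall>\<^sub>F y in at_right 0. root_eq \<mu> z y (root_lower z y) < 0"
    unfolding root_eq_def root_lower_def by real_asymp
  moreover have "\<forall>\<^sub>F y in at_right 0. root_upper z y - ln (root_upper z y) - ln (1/y) + ln z
      - \<bar>2*\<mu> - 1\<bar> * y / root_upper z y > 0"
    unfolding root_upper_def root_lower_def by real_asymp
  ultimately show ?thesis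
  proof eventually_elim
    case (elim y)
    then show ?case
      using u_y_between[of y z "root_lower z y" "root_upper z y" \<mu>] assms by blast
  qed
qed

lemma u_y_asymptotics:
  fixes \<mu> z :: real
  assumes "z > 0"
  shows "(\<lambda>y. u_y \<mu> z y / (ln y ^ 2 / (4 * y^2)) - (1 - 2 * ln (ln (1/y)) / ln y + ln (z^2) / ln y))
           \<in> o[at_right 0](\<lambda>y. 1 / ln y)"
proof -
  define P where "P y = 1 - 2 * ln (ln (1/y)) / ln y + 2 * ln z / ln y" for y :: real
  have lower: "(\<lambda>y. root_lower z y ^ 2 / ln y ^ 2 - P y) \<in> o[at_right 0](\<lambda>y. 1 / ln y)"
    unfolding P_def root_lower_def by real_asymp
  have upper: "(\<lambda>y. root_upper z y ^ 2 / ln y ^ 2 - P y) \<in> o[at_right 0](\<lambda>y. 1 / ln y)"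
    unfolding P_def root_upper_def root_lower_def by real_asymp
  have between: "\<forall>\<^sub>F y in at_right 0.
      root_lower z y ^ 2 / ln y ^ 2 - P y \<le> u_y \<mu> z y / (ln y ^ 2 / (4 * y^2)) - P y \<and>
      u_y \<mu> z y / (ln y ^ 2 / (4 * y^2)) - P y \<le> root_upper z y ^ 2 / ln y ^ 2 - P y"
    using eventually_u_y_between_root_bounds[OF assms, of \<mu>] eventually_at_right_less[of 0]
      eventually_root_lower_pos[of z]
  proof eventually_elim
    case (elim y)
    then obtain t where t: "root_lower z y \<le> t" "t \<le> root_upper z y" "u_y \<mu> z y = (t/(2*y))^2"
      by blast
    have "(t/(2*y))^2 = t^2 / (4 * y^2)" by (simp add: power_divide power_mult_distrib)
    then have ratio: "u_y \<mu> z y / (ln y ^ 2 / (4 * y^2)) = t^2 / ln y ^ 2"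
      using t(3) elim(2) by simp
    have "root_lower z y ^ 2 / ln y ^ 2 \<le> t^2 / ln y ^ 2" "t^2 / ln y ^ 2 \<le> root_upper z y ^ 2 / ln y ^ 2"
      using t elim(3) by (auto intro!: divide_right_mono power_mono)
    then show ?case unfolding ratio by simp
  qed
  have "ln (z^2) = 2 * ln z" using assms by (simp add: ln_realpow)
  then show ?thesis
    using eventually_between_smallo[OF between lower upper] by (simp add: P_def)
qed

lemma M_y_scaled:
  fixes \<mu> z y t :: real
  assumes "y > 0" and "t > 0" and "u_y \<mu> z y = (t/(2*y))^2"
  shows "M_y \<mu> z y / (y^3 / ln y ^ 2)
           = (ln t + (ln (1/y) - ln 2 - alpha z)) * ln y ^ 2 / t^3 + 2 * (1 - 2*\<mu>) * y * ln y ^ 2 / t^4"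
proof -
  define r where "r = t/(2*y)"
  have r: "r > 0" using assms(1,2) by (simp add: r_def)
  have pow: "(r^2) powr (3/2) = r^3"
  proof -
    have "(r powr 2) powr (3/2) = r powr 3" by (simp add: powr_powr)
    then show ?thesis
      using powr_numeral[of r "num.Bit0 num.One"] powr_numeral[of r "num.Bit1 num.One"] r by simp
  qed
  have log: "ln (r^2) = 2 * ln r" using r by (simp add: ln_realpow)
  have "M_y \<mu> z y = 2 * ln r / (16 * r^3) - alpha z / (8 * r^3) + (1 - 2*\<mu>) / (8 * r^4)"
    unfolding M_y_def Let_def assms(3) r_def[symmetric] pow log by simp
  also have "\<dots> = (ln r - alpha z) / (8 * r^3) + (1 - 2*\<mu>) / (8 * r^4)"
    by (simp add: diff_divide_distrib)
  finally have "M_y \<mu> z y = (ln r - alpha z) / (8 * r^3) + (1 - 2*\<mu>) / (8 * r^4)" .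
  moreover have "8 * r^3 = t^3 / y^3" "8 * r^4 = t^4 / (2 * y^4)"
    by (simp_all add: r_def power_divide)
  ultimately have M: "M_y \<mu> z y = (ln r - alpha z) / (t^3 / y^3) + (1 - 2*\<mu>) / (t^4 / (2 * y^4))"
    by (simp only:)
  have logr: "ln r = ln t + (ln (1/y) - ln 2)"
    using assms(1,2) by (simp add: r_def ln_div ln_mult)
  show ?thesis
    unfolding M logr using assms(1,2) by (simp add: field_simps eval_nat_numeral)
qed

lemma log_over_cube_bounds:
  fixes A B t K Q e E :: real
  assumes "0 < A" and "A \<le> t" and "t \<le> B" and "0 \<le> ln A + K" and "0 \<le> Q" and "\<bar>e\<bar> \<le> E"
  shows "(ln A + K) * Q / B^3 - E / A^4 \<le> (ln t + K) * Q / t^3 + e / t^4"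
    and "(ln t + K) * Q / t^3 + e / t^4 \<le> (ln B + K) * Q / A^3 + E / A^4"
proof -
  have pos: "0 < t" "0 < B" using assms(1-3) by linarith+
  have "ln A \<le> ln t" "ln t \<le> ln B" using assms(1-3) pos by simp_all
  then have num: "0 \<le> (ln A + K) * Q" "(ln A + K) * Q \<le> (ln t + K) * Q" "(ln t + K) * Q \<le> (ln B + K) * Q"
    using assms(4,5) by (auto intro: mult_right_mono)
  have den: "A^3 \<le> t^3" "t^3 \<le> B^3" using assms(1-3) by (auto intro: power_mono)
  have main: "(ln A + K) * Q / B^3 \<le> (ln t + K) * Q / t^3" "(ln t + K) * Q / t^3 \<le> (ln B + K) * Q / A^3"
    using num den assms(1) pos by (auto intro!: frac_le)
  have "\<bar>e / t^4\<bar> \<le> E / t^4" using assms(6) pos by (simp add: abs_divide divide_right_mono)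
  also have "\<dots> \<le> E / A^4"
    using assms(1,2,6) by (intro divide_left_mono power_mono mult_pos_pos) auto
  finally have "- (E / A^4) \<le> e / t^4" "e / t^4 \<le> E / A^4"
    by (simp_all only: abs_le_iff) linarith+
  then show "(ln A + K) * Q / B^3 - E / A^4 \<le> (ln t + K) * Q / t^3 + e / t^4"
    and "(ln t + K) * Q / t^3 + e / t^4 \<le> (ln B + K) * Q / A^3 + E / A^4"
    using main by linarith+
qed

lemma M_y_asymptotics:
  fixes \<mu> z :: real
  assumes "z > 0"
  shows "(\<lambda>y. M_y \<mu> z y / (y^3 / ln y ^ 2) - 1) \<in> O[at_right 0](\<lambda>y. ln \<bar>ln y\<bar> / ln y)"
proof -
  define K where "K y = ln (1/y) - ln 2 - alpha z" for y :: real
  define E where "E y = 2 * \<bar>1 - 2*\<mu>\<bar> * y * ln y ^ 2" for y :: real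
  have lower: "(\<lambda>y. (ln (root_lower z y) + K y) * ln y ^ 2 / root_upper z y ^ 3 - E y / root_lower z y ^ 4 - 1)
      \<in> O[at_right 0](\<lambda>y. ln \<bar>ln y\<bar> / ln y)"
    unfolding K_def E_def alpha_def root_upper_def root_lower_def by real_asymp
  have upper: "(\<lambda>y. (ln (root_upper z y) + K y) * ln y ^ 2 / root_lower z y ^ 3 + E y / root_lower z y ^ 4 - 1)
      \<in> O[at_right 0](\<lambda>y. ln \<bar>ln y\<bar> / ln y)"
    unfolding K_def E_def alpha_def root_upper_def root_lower_def by real_asymp
  have "\<forall>\<^sub>F y in at_right 0. 0 \<le> ln (root_lower z y) + K y"
    unfolding K_def alpha_def root_lower_def by real_asymp
  then have between: "\<forall>\<^sub>F y in at_right 0.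
      (ln (root_lower z y) + K y) * ln y ^ 2 / root_upper z y ^ 3 - E y / root_lower z y ^ 4 - 1
        \<le> M_y \<mu> z y / (y^3 / ln y ^ 2) - 1 \<and>
      M_y \<mu> z y / (y^3 / ln y ^ 2) - 1
        \<le> (ln (root_upper z y) + K y) * ln y ^ 2 / root_lower z y ^ 3 + E y / root_lower z y ^ 4 - 1"
    using eventually_u_y_between_root_bounds[OF assms, of \<mu>] eventually_at_right_less[of 0]
      eventually_root_lower_pos[of z]
  proof eventually_elim
    case (elim y)
    then obtain t where t: "root_lower z y \<le> t" "t \<le> root_upper z y" "u_y \<mu> z y = (t/(2*y))^2"
      by blast
    have "\<bar>2 * (1 - 2*\<mu>) * y * ln y ^ 2\<bar> \<le> E y"
      unfolding E_def abs_mult using elim(3) by simp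
    note bounds = log_over_cube_bounds[OF elim(4) t(1,2) elim(1) zero_le_power2 this]
    have "M_y \<mu> z y / (y^3 / ln y ^ 2) = (ln t + K y) * ln y ^ 2 / t^3 + 2 * (1 - 2*\<mu>) * y * ln y ^ 2 / t^4"
      using M_y_scaled[OF elim(3) _ t(3)] elim(4) t(1) by (simp add: K_def)
    then show ?case using bounds by simp
  qed
  show ?thesis by (rule eventually_between_bigo[OF between lower upper])
qed

theorem mainTheorem3:
  fixes \<mu> z :: real
  assumes "\<mu> > -3/2" and "z > 0"
  shows "(\<lambda>y. u_y \<mu> z y / (ln y ^ 2 / (4 * y^2))
              - (1 - 2 * ln (ln (1/y)) / ln y + ln (z^2) / ln y))
           \<in> o[at_right 0](\<lambda>y. 1 / ln y) \<and>
         (\<lambda>y. M_y \<mu> z y / (y^3 / ln y ^ 2) - 1)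
           \<in> O[at_right 0](\<lambda>y. ln \<bar>ln y\<bar> / ln y)"
  using u_y_asymptotics[OF assms(2)] M_y_asymptotics[OF assms(2)] by blast

end
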